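(* Let $M=2Z+1$ with $Z\ge 1$ an integer, and let $\gamma_1,\dots,\gamma_{M-1}$ be nonzero real numbers and $J_1,\dots,J_{M-1}$ real numbers. Consider $$H_{\gamma J}=\sum_{m=1}^{M-1}\Big(J_m c_{m+1}^\dagger c_m\sigma_{m+1}^+ + \text{h.c.}\Big) - \sum_{m=1}^{M-1}\Big(\gamma_m c_{m+1}^\dagger c_m + \text{h.c.}\Big)$$ on the open chain of $M$ sites. Then the subspace of states with exactly one fermion and with spin on site $1$ equal to $|\uparrow\rangle$ contains $2^{M-1}$ linearly independent states $|\Psi\rangle$ with $H_{\gamma J}|\Psi\rangle=0$.
   Context: Each site $m=1,\dots,M$ carries one spinless fermion mode ($c_m,c_m^\dagger$, canonical anticommutation relations) and one spin-$1/2$ with Pauli matrices $\sigma_m^{x,y,z}$; $\sigma_m^{\pm}=\sigma_m^x\pm i\sigma_m^y$. The Hilbert space is the tensor product of the fermionic Fock space and the $M$ spin spaces; $H_{\gamma J}$ conserves the fermion number $\sum_m c_m^\dagger c_m$ and does not act on the spin at site $1$. *)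

theory Defs
  imports Complex_Main "HOL-Library.Function_Algebras"
begin

text \<open>Fock basis of M fermion modes times M spins-1/2: a basis vector is a pair (n, s),
  n = set of occupied fermion sites, s = set of sites whose spin is up (both subsets of {1..M}).\<close>

type_synonym state = "(nat set \<times> nat set) \<Rightarrow> complex"

definition valid_state :: "nat \<Rightarrow> state \<Rightarrow> bool" where
  "valid_state M \<psi> \<longleftrightarrow> (\<forall>n s. \<psi> (n, s) \<noteq> 0 \<longrightarrow> n \<subseteq> {1..M} \<and> s \<subseteq> {1..M})"

definition jw_sign :: "nat set \<Rightarrow> nat \<Rightarrow> complex" where
  "jw_sign n m = (-1) ^ card {j \<in> n. j < m}"

text \<open>c_m^dagger |n> = sign |n + {m}> (m not in n), else 0; operators act on coefficient functions.\<close>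
definition cdag :: "nat \<Rightarrow> state \<Rightarrow> state" where
  "cdag m \<psi> = (\<lambda>(n, s). if m \<in> n then jw_sign n m * \<psi> (n - {m}, s) else 0)"

text \<open>c_m |n> = sign |n - {m}> (m in n), else 0.\<close>
definition cann :: "nat \<Rightarrow> state \<Rightarrow> state" where
  "cann m \<psi> = (\<lambda>(n, s). if m \<notin> n then jw_sign n m * \<psi> (insert m n, s) else 0)"

text \<open>sigma^+ = sigma^x + i sigma^y = 2 |up><down|.\<close>
definition sig_plus :: "nat \<Rightarrow> state \<Rightarrow> state" where
  "sig_plus m \<psi> = (\<lambda>(n, s). if m \<in> s then 2 * \<psi> (n, s - {m}) else 0)"

text \<open>sigma^- = sigma^x - i sigma^y = 2 |down><up|.\<close>
definition sig_minus :: "nat \<Rightarrow> state \<Rightarrow> state" where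
  "sig_minus m \<psi> = (\<lambda>(n, s). if m \<notin> s then 2 * \<psi> (n, insert m s) else 0)"

definition H_gJ :: "nat \<Rightarrow> (nat \<Rightarrow> real) \<Rightarrow> (nat \<Rightarrow> real) \<Rightarrow> state \<Rightarrow> state" where
  "H_gJ M \<gamma> J \<psi> = (\<lambda>x.
      (\<Sum>m=1..M-1. complex_of_real (J m) *
          (cdag (m+1) (cann m (sig_plus (m+1) \<psi>)) x + cdag m (cann (m+1) (sig_minus (m+1) \<psi>)) x))
    - (\<Sum>m=1..M-1. complex_of_real (\<gamma> m) *
          (cdag (m+1) (cann m \<psi>) x + cdag m (cann (m+1) \<psi>) x)))"

definition one_fermion_up1 :: "state \<Rightarrow> bool" where
  "one_fermion_up1 \<psi> \<longleftrightarrow> (\<forall>n s. \<psi> (n, s) \<noteq> 0 \<longrightarrow> card n = 1 \<and> 1 \<in> s)"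

abbreviation lin_indep_states :: "state set \<Rightarrow> bool" where
  "lin_indep_states S \<equiv> \<not> module.dependent (\<lambda>(c::complex) (f::state) x. c * f x) S"

end

theory Submission
  imports Defs
begin

text \<open>On one-fermion states H acts as a nearest-neighbour hopping chain whose hopping amplitudes
  are operators on the spin configuration. Let the fermion live on odd sites only: then H\<psi>
  vanishes at odd sites, and at the even site 2j+2 the condition reads
  (\<gamma> - J sigma^-) f(2j+3) = (J sigma^+ - \<gamma>) f(2j+1),
  which determines the amplitude on site 2j+3 because \<gamma> \<noteq> 0 and sigma^- squares to zero.
  Hence every spin amplitude at site 1 extends to a zero mode; taking the 2^(M-1) spin
  configurations with spin 1 up gives states that are independent, being already
  distinguished by their amplitudes at site 1.\<close>

type_synonym spin_fun = "nat set \<Rightarrow> complex"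

definition one_particle :: "(nat \<Rightarrow> spin_fun) \<Rightarrow> state" where
  "one_particle f = (\<lambda>(n, s). if is_singleton n then f (the_elem n) s else 0)"

lemma one_particle_singleton [simp]: "one_particle f ({k}, s) = f k s"
  by (simp add: one_particle_def)

lemma one_particle_nonsingleton: "\<not> is_singleton n \<Longrightarrow> one_particle f (n, s) = 0"
  by (simp add: one_particle_def)

lemma one_particle_0 [simp]: "one_particle 0 = 0"
  by (simp add: fun_eq_iff one_particle_def)

lemma jw_sign_empty [simp]: "jw_sign {} m = 1"
  by (simp add: jw_sign_def)

lemma jw_sign_singleton_self [simp]: "jw_sign {m} m = 1"
proof -
  have "{j \<in> {m}. j < m} = {}" by auto
  then show ?thesis by (simp only: jw_sign_def) simp
qed

definition spin_raise :: "nat \<Rightarrow> spin_fun \<Rightarrow> spin_fun" where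
  "spin_raise k h s = (if k \<in> s then 2 * h (s - {k}) else 0)"

definition spin_lower :: "nat \<Rightarrow> spin_fun \<Rightarrow> spin_fun" where
  "spin_lower k h s = (if k \<notin> s then 2 * h (insert k s) else 0)"

lemma sig_plus_one_particle: "sig_plus k (one_particle f) = one_particle (\<lambda>i. spin_raise k (f i))"
  by (auto simp: fun_eq_iff sig_plus_def spin_raise_def one_particle_def)

lemma sig_minus_one_particle: "sig_minus k (one_particle f) = one_particle (\<lambda>i. spin_lower k (f i))"
  by (auto simp: fun_eq_iff sig_minus_def spin_lower_def one_particle_def)

lemma cdag_cann_one_particle:
  assumes "a \<noteq> b"
  shows "cdag a (cann b (one_particle f)) = one_particle (\<lambda>k s. if k = a then f b s else 0)"
proof (rule ext, clarify)
  fix n s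
  show "cdag a (cann b (one_particle f)) (n, s) = one_particle (\<lambda>k s. if k = a then f b s else 0) (n, s)"
  proof (cases "n = {a}")
    case True
    then show ?thesis using assms by (simp add: cdag_def cann_def)
  next
    case False
    have "\<not> is_singleton (insert b (n - {a}))" if "a \<in> n" "b \<notin> n - {a}"
      using that False by (auto simp: is_singleton_def)
    then show ?thesis using False
      by (auto simp: cdag_def cann_def one_particle_def is_singleton_def)
  qed
qed

definition raise_hop :: "complex \<Rightarrow> complex \<Rightarrow> nat \<Rightarrow> spin_fun \<Rightarrow> spin_fun" where
  "raise_hop a c k h s = a * spin_raise k h s - c * h s"

definition lower_hop :: "complex \<Rightarrow> complex \<Rightarrow> nat \<Rightarrow> spin_fun \<Rightarrow> spin_fun" where
  "lower_hop a c k h s = a * spin_lower k h s - c * h s"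

definition one_particle_H ::
    "nat \<Rightarrow> (nat \<Rightarrow> real) \<Rightarrow> (nat \<Rightarrow> real) \<Rightarrow> (nat \<Rightarrow> spin_fun) \<Rightarrow> nat \<Rightarrow> spin_fun" where
  "one_particle_H M \<gamma> J f k s =
     (if 2 \<le> k \<and> k \<le> M
      then raise_hop (of_real (J (k - 1))) (of_real (\<gamma> (k - 1))) k (f (k - 1)) s else 0)
   + (if 1 \<le> k \<and> k < M
      then lower_hop (of_real (J k)) (of_real (\<gamma> k)) (k + 1) (f (k + 1)) s else 0)"

lemma sum_if_Suc_eq:
  "(\<Sum>m\<in>A. if k = Suc m then g m else 0)
    = (if 1 \<le> k \<and> k - 1 \<in> A then g (k - 1) else (0::'a::comm_monoid_add))"
  if "finite A"
proof -
  have "(\<Sum>m\<in>A. if k = Suc m then g m else 0)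
      = (\<Sum>m\<in>A. if m = k - 1 then (if 1 \<le> k then g m else 0) else 0)"
    by (rule sum.cong) auto
  then show ?thesis using that by (simp add: sum.delta')
qed

lemma H_gJ_one_particle: "H_gJ M \<gamma> J (one_particle f) = one_particle (one_particle_H M \<gamma> J f)"
proof (rule ext, clarify)
  fix n s
  show "H_gJ M \<gamma> J (one_particle f) (n, s) = one_particle (one_particle_H M \<gamma> J f) (n, s)"
  proof (cases "is_singleton n")
    case True
    then obtain k where "n = {k}" by (auto simp: is_singleton_def)
    moreover have "\<And>c P x. c * (if P then x else 0) = (if P then c * x else (0::complex))" by simp
    ultimately show ?thesis
      by (auto simp add: H_gJ_def cdag_cann_one_particle sig_plus_one_particle sig_minus_one_particle
          distrib_left sum.distrib sum_if_Suc_eq sum.delta sum.delta' one_particle_H_def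
          raise_hop_def lower_hop_def)
  next
    case False
    then show ?thesis
      by (simp add: H_gJ_def cdag_cann_one_particle sig_plus_one_particle sig_minus_one_particle
          one_particle_nonsingleton)
  qed
qed

text \<open>A two-term Neumann series: sigma^-_k squares to zero.\<close>

definition lower_hop_inv :: "complex \<Rightarrow> complex \<Rightarrow> nat \<Rightarrow> spin_fun \<Rightarrow> spin_fun" where
  "lower_hop_inv a c k g s = - (g s + a / c * spin_lower k g s) / c"

lemma lower_hop_lower_hop_inv:
  assumes "c \<noteq> 0"
  shows "lower_hop a c k (lower_hop_inv a c k g) = g"
  using assms by (simp add: fun_eq_iff lower_hop_def lower_hop_inv_def spin_lower_def field_simps)

primrec odd_site_amp ::
    "(nat \<Rightarrow> real) \<Rightarrow> (nat \<Rightarrow> real) \<Rightarrow> spin_fun \<Rightarrow> nat \<Rightarrow> spin_fun" where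
  "odd_site_amp \<gamma> J h 0 = h"
| "odd_site_amp \<gamma> J h (Suc j) =
     lower_hop_inv (of_real (J (2 * j + 2))) (of_real (\<gamma> (2 * j + 2))) (2 * j + 3)
       (- raise_hop (of_real (J (2 * j + 1))) (of_real (\<gamma> (2 * j + 1))) (2 * j + 2)
            (odd_site_amp \<gamma> J h j))"

definition zero_mode_amp ::
    "nat \<Rightarrow> (nat \<Rightarrow> real) \<Rightarrow> (nat \<Rightarrow> real) \<Rightarrow> spin_fun \<Rightarrow> nat \<Rightarrow> spin_fun" where
  "zero_mode_amp M \<gamma> J h k = (if odd k \<and> k \<le> M then odd_site_amp \<gamma> J h (k div 2) else 0)"

lemma one_particle_H_zero_mode_amp:
  assumes "odd M" and "\<forall>m\<in>{1..M-1}. \<gamma> m \<noteq> 0"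
  shows "one_particle_H M \<gamma> J (zero_mode_amp M \<gamma> J h) k s = 0"
proof -
  have "odd k \<or> (even k \<and> 2 \<le> k \<and> k < M) \<or> (even k \<and> (k = 0 \<or> M < k))"
    using \<open>odd M\<close> by presburger
  then consider "odd k" | "even k" "2 \<le> k" "k < M" | "even k" "k = 0 \<or> M < k"
    by blast
  then show ?thesis
  proof cases
    case 1
    then show ?thesis
      by (simp add: one_particle_H_def zero_mode_amp_def raise_hop_def lower_hop_def
          spin_raise_def spin_lower_def)
  next
    case 2
    define j where "j = k div 2 - 1"
    have k: "k - 1 = 2 * j + 1" "k = 2 * j + 2" "k + 1 = 2 * j + 3" using 2 unfolding j_def by presburger+
    have "\<gamma> (2 * j + 2) \<noteq> 0" using assms(2) 2 k by auto
    then have "lower_hop (of_real (J k)) (of_real (\<gamma> k)) (k + 1) (odd_site_amp \<gamma> J h (Suc j))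
        = - raise_hop (of_real (J (k - 1))) (of_real (\<gamma> (k - 1))) k (odd_site_amp \<gamma> J h j)"
      unfolding k(1,3) unfolding k(2) odd_site_amp.simps(2) by (simp add: lower_hop_lower_hop_inv)
    moreover have "zero_mode_amp M \<gamma> J h (k - 1) = odd_site_amp \<gamma> J h j"
      "zero_mode_amp M \<gamma> J h (k + 1) = odd_site_amp \<gamma> J h (Suc j)"
      using 2 k by (simp_all add: zero_mode_amp_def del: odd_site_amp.simps)
    ultimately show ?thesis
      using 2 by (simp add: one_particle_H_def del: odd_site_amp.simps)
  next
    case 3
    then show ?thesis by (auto simp: one_particle_H_def)
  qed
qed

definition zero_mode :: "nat \<Rightarrow> (nat \<Rightarrow> real) \<Rightarrow> (nat \<Rightarrow> real) \<Rightarrow> spin_fun \<Rightarrow> state" where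
  "zero_mode M \<gamma> J h = one_particle (zero_mode_amp M \<gamma> J h)"

lemma H_gJ_zero_mode:
  assumes "odd M" and "\<forall>m\<in>{1..M-1}. \<gamma> m \<noteq> 0"
  shows "H_gJ M \<gamma> J (zero_mode M \<gamma> J h) = 0"
proof -
  have "one_particle_H M \<gamma> J (zero_mode_amp M \<gamma> J h) = 0"
    using one_particle_H_zero_mode_amp[OF assms] by (simp add: fun_eq_iff)
  then show ?thesis by (simp add: zero_mode_def H_gJ_one_particle)
qed

lemma zero_mode_site1 [simp]: "1 \<le> M \<Longrightarrow> zero_mode M \<gamma> J h ({1}, s) = h s"
  by (simp add: zero_mode_def zero_mode_amp_def)

definition up1_spins :: "nat \<Rightarrow> nat set set" where
  "up1_spins M = {s. 1 \<in> s \<and> s \<subseteq> {1..M}}"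

lemma spin_raise_support:
  assumes "k \<in> {1..M}" and "{s. h s \<noteq> 0} \<subseteq> up1_spins M"
  shows "{s. spin_raise k h s \<noteq> 0} \<subseteq> up1_spins M"
proof
  fix s assume "s \<in> {s. spin_raise k h s \<noteq> 0}"
  then have "k \<in> s" "h (s - {k}) \<noteq> 0" by (auto simp: spin_raise_def split: if_splits)
  then have "s - {k} \<in> up1_spins M" using assms(2) by blast
  then show "s \<in> up1_spins M" using assms(1) \<open>k \<in> s\<close> by (auto simp: up1_spins_def)
qed

lemma spin_lower_support:
  assumes "k \<noteq> 1" and "{s. h s \<noteq> 0} \<subseteq> up1_spins M"
  shows "{s. spin_lower k h s \<noteq> 0} \<subseteq> up1_spins M"
proof
  fix s assume "s \<in> {s. spin_lower k h s \<noteq> 0}"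
  then have "h (insert k s) \<noteq> 0" by (auto simp: spin_lower_def split: if_splits)
  then have "insert k s \<in> up1_spins M" using assms(2) by blast
  then show "s \<in> up1_spins M" using assms(1) by (auto simp: up1_spins_def)
qed

lemma raise_hop_support:
  assumes "k \<in> {1..M}" and "{s. h s \<noteq> 0} \<subseteq> up1_spins M"
  shows "{s. raise_hop a c k h s \<noteq> 0} \<subseteq> up1_spins M"
proof -
  have "{s. raise_hop a c k h s \<noteq> 0} \<subseteq> {s. spin_raise k h s \<noteq> 0} \<union> {s. h s \<noteq> 0}"
    by (auto simp: raise_hop_def)
  then show ?thesis using assms spin_raise_support by blast
qed

lemma lower_hop_inv_support:
  assumes "k \<noteq> 1" and "{s. g s \<noteq> 0} \<subseteq> up1_spins M"
  shows "{s. lower_hop_inv a c k g s \<noteq> 0} \<subseteq> up1_spins M"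
proof -
  have "{s. lower_hop_inv a c k g s \<noteq> 0} \<subseteq> {s. g s \<noteq> 0} \<union> {s. spin_lower k g s \<noteq> 0}"
    by (auto simp: lower_hop_inv_def)
  then show ?thesis using assms spin_lower_support by blast
qed

lemma odd_site_amp_support:
  assumes "{s. h s \<noteq> 0} \<subseteq> up1_spins M" and "2 * j + 1 \<le> M"
  shows "{s. odd_site_amp \<gamma> J h j s \<noteq> 0} \<subseteq> up1_spins M"
  using assms(2)
proof (induction j)
  case 0
  then show ?case using assms(1) by simp
next
  case (Suc j)
  then have "{s. raise_hop (of_real (J (2 * j + 1))) (of_real (\<gamma> (2 * j + 1))) (2 * j + 2)
      (odd_site_amp \<gamma> J h j) s \<noteq> 0} \<subseteq> up1_spins M"
    by (intro raise_hop_support) auto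
  then show ?case by (simp add: lower_hop_inv_support)
qed

lemma zero_mode_support:
  assumes "{s. h s \<noteq> 0} \<subseteq> up1_spins M" and "zero_mode M \<gamma> J h (n, s) \<noteq> 0"
  shows "\<exists>k\<in>{1..M}. n = {k}" and "s \<in> up1_spins M"
proof -
  have "is_singleton n"
    using assms(2) one_particle_nonsingleton unfolding zero_mode_def by blast
  then obtain k where "n = {k}" by (auto simp: is_singleton_def)
  with assms(2) have k: "n = {k}" "odd k" "k \<le> M"
    and amp: "odd_site_amp \<gamma> J h (k div 2) s \<noteq> 0"
    by (simp_all add: zero_mode_def zero_mode_amp_def split: if_splits)
  then show "\<exists>k\<in>{1..M}. n = {k}" by (auto intro: odd_pos)
  have "2 * (k div 2) + 1 \<le> M" using k by presburger
  with amp show "s \<in> up1_spins M" using odd_site_amp_support[OF assms(1)] by blast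
qed

lemma valid_state_zero_mode:
  assumes "{s. h s \<noteq> 0} \<subseteq> up1_spins M"
  shows "valid_state M (zero_mode M \<gamma> J h)"
  unfolding valid_state_def
proof (intro allI impI)
  fix n s assume nz: "zero_mode M \<gamma> J h (n, s) \<noteq> 0"
  then obtain k where "k \<in> {1..M}" "n = {k}" using zero_mode_support(1)[OF assms] by blast
  then show "n \<subseteq> {1..M} \<and> s \<subseteq> {1..M}"
    using zero_mode_support(2)[OF assms nz] by (simp add: up1_spins_def)
qed

lemma one_fermion_up1_zero_mode:
  assumes "{s. h s \<noteq> 0} \<subseteq> up1_spins M"
  shows "one_fermion_up1 (zero_mode M \<gamma> J h)"
  unfolding one_fermion_up1_def
proof (intro allI impI)
  fix n s assume nz: "zero_mode M \<gamma> J h (n, s) \<noteq> 0"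
  then obtain k where "n = {k}" using zero_mode_support(1)[OF assms] by blast
  then show "card n = 1 \<and> 1 \<in> s"
    using zero_mode_support(2)[OF assms nz] by (simp add: up1_spins_def)
qed

lemma sum_fun_apply: "(\<Sum>v\<in>A. f v) x = (\<Sum>v\<in>A. f v x)"
  by (induction A rule: infinite_finite_induct) auto

lemma inj_on_biorthogonal:
  assumes "\<And>t t'. t \<in> T \<Longrightarrow> t' \<in> T \<Longrightarrow> v t (x t') = (if t = t' then 1 else (0::'b::zero_neq_one))"
  shows "inj_on v T"
  by (rule inj_onI) (metis assms zero_neq_one)

lemma lin_indep_states_biorthogonal:
  assumes "\<And>t t'. t \<in> T \<Longrightarrow> t' \<in> T \<Longrightarrow> v t (x t') = (if t = t' then 1 else 0)"
  shows "lin_indep_states (v ` T)"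
proof
  have "module (\<lambda>(c::complex) (f::state) x. c * f x)"
    by unfold_locales (auto simp: fun_eq_iff algebra_simps)
  moreover assume "module.dependent (\<lambda>(c::complex) (f::state) x. c * f x) (v ` T)"
  ultimately obtain U u w where U: "finite U" "U \<subseteq> v ` T"
    and sum0: "(\<Sum>w\<in>U. (\<lambda>x. u w * w x)) = 0" and w: "w \<in> U" "u w \<noteq> 0"
    by (auto simp: module.dependent_explicit)
  obtain t where t: "t \<in> T" "w = v t" using w U by auto
  have "0 = (\<Sum>w'\<in>U. (\<lambda>x. u w' * w' x)) (x t)" using sum0 by simp
  also have "\<dots> = (\<Sum>w'\<in>U. u w' * w' (x t))" by (simp add: sum_fun_apply)
  also have "\<dots> = (\<Sum>w'\<in>U. if w' = w then u w' else 0)"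
  proof (rule sum.cong [OF refl])
    fix w' assume "w' \<in> U"
    then obtain t' where t': "t' \<in> T" "w' = v t'" using U by auto
    then have "w' = w \<longleftrightarrow> t' = t"
      using t inj_on_biorthogonal[of T v x] assms by (auto dest: inj_onD)
    then show "u w' * w' (x t) = (if w' = w then u w' else 0)" using assms t t' by auto
  qed
  also have "\<dots> = u w" using U w by (simp add: sum.delta')
  finally show False using w by simp
qed

theorem mainTheorem2:
  fixes Z M :: nat and \<gamma> J :: "nat \<Rightarrow> real"
  assumes "Z \<ge> 1" and "M = 2 * Z + 1"
    and "\<forall>m\<in>{1..M-1}. \<gamma> m \<noteq> 0"
  shows "\<exists>S. S \<subseteq> {\<psi>. valid_state M \<psi> \<and> one_fermion_up1 \<psi> \<and> H_gJ M \<gamma> J \<psi> = 0}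
            \<and> finite S \<and> card S = 2 ^ (M - 1) \<and> lin_indep_states S"
proof (intro exI conjI)
  define T where "T = Pow {2..M}"
  define h where "h (t :: nat set) s = (if s = insert 1 t then 1 else 0 :: complex)" for t s
  define v where "v t = zero_mode M \<gamma> J (h t)" for t
  define e where "e (t :: nat set) = ({1 :: nat}, insert 1 t)" for t
  have "odd M" "1 \<le> M" using assms(2) by simp_all
  have support: "{s. h t s \<noteq> 0} \<subseteq> up1_spins M" if "t \<in> T" for t
    using that \<open>1 \<le> M\<close> by (auto simp: h_def T_def up1_spins_def)
  have biorth: "v t (e t') = (if t = t' then 1 else 0)" if "t \<in> T" "t' \<in> T" for t t'
  proof -
    have "1 \<notin> t" "1 \<notin> t'" using that by (auto simp: T_def)
    then show ?thesis unfolding v_def e_def zero_mode_site1[OF \<open>1 \<le> M\<close>] h_def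
      by (simp add: insert_ident eq_commute)
  qed
  show "v ` T \<subseteq> {\<psi>. valid_state M \<psi> \<and> one_fermion_up1 \<psi> \<and> H_gJ M \<gamma> J \<psi> = 0}"
    using support valid_state_zero_mode one_fermion_up1_zero_mode
      H_gJ_zero_mode[OF \<open>odd M\<close> assms(3)]
    by (auto simp: v_def)
  show "finite (v ` T)" by (simp add: T_def)
  show "card (v ` T) = 2 ^ (M - 1)"
    using card_image[OF inj_on_biorthogonal[of T v e, OF biorth]] by (simp add: T_def card_Pow)
  show "lin_indep_states (v ` T)" using lin_indep_states_biorthogonal[of T v e, OF biorth] .
qed

end
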